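(* Let $d$ be a positive integer and let $z_j\in\mathbb{C}$ be given for each $j\in[d]$ relatively prime to $d$. Suppose that for every $m\le 6$ and every $m$-tuple $(j_1,\dots,j_m)$ of elements of $[d]$ relatively prime to $d$ satisfying $j_1+\cdots+j_m\equiv 0\pmod d$, we have $z_{j_1}+\cdots+z_{j_m}\in\mathbb{Z}$. Then there exists an integer $c$ such that $z_j-\frac{cj}{d}\in\mathbb{Z}$ for all $j\in[d]$ relatively prime to $d$.
   Context: $[d]=\{1,\dots,d\}$; tuples may contain repeated entries, and $m\ge1$. *)

theory Defs
  imports "HOL-Analysis.Analysis"
begin

end

theory Submission
  imports Defs "HOL-Number_Theory.Cong"
begin

text \<open>
  Put \<open>u x = z r\<close> where \<open>r \<in> {1..d}\<close> is the residue of \<open>x\<close>. The relations \<open>x + (-x) \<equiv> 0\<close>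
  and \<open>a - b - c' + c - 1 - 1 \<equiv> 0\<close> (mod \<open>d\<close>) show by induction on \<open>k\<close> that
  \<open>u a - u b - 2k u 1\<close> is an integer for all units \<open>a \<equiv> b + 2k\<close>, provided units \<open>c, c' = c + 2k\<close>
  always exist; they do: take \<open>c = y - k\<close>, with \<open>y\<close> the product of the primes dividing \<open>d\<close>
  but not \<open>k\<close>. For even \<open>d\<close> (with \<open>a = b = 1\<close>, \<open>2k = d\<close>), and for odd \<open>d\<close> together with
  \<open>1 + 1 - 2 \<equiv> 0\<close>, this makes \<open>d u 1\<close> an integer \<open>c\<close>. As \<open>a - 1\<close> is congruent to an even
  number for every unit \<open>a\<close>, it follows that \<open>u a - a c / d\<close> is an integer.
\<close>

lemma coprime_primeI:
  fixes a n :: "'a :: factorial_semiring_gcd"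
  assumes "n \<noteq> 0" and "\<And>p. prime p \<Longrightarrow> p dvd n \<Longrightarrow> \<not> p dvd a"
  shows "coprime a n"
proof (rule ccontr)
  assume "\<not> coprime a n"
  then obtain c where c: "c dvd a" "c dvd n" "\<not> is_unit c" by (rule not_coprimeE)
  have "c \<noteq> 0" using c(2) assms(1) by auto
  then obtain p where "prime p" "p dvd c" using c(3) prime_divisor_exists by blast
  then show False using assms(2) c(1,2) by (meson dvd_trans)
qed

lemma ex_coprime_diff_add:
  fixes n h :: int
  assumes "n \<noteq> 0"
  shows "\<exists>y. coprime (y - h) n \<and> coprime (y + h) n"
proof -
  \<comment> \<open>Every prime factor of \<open>n\<close> divides exactly one of \<open>y\<close> and \<open>h\<close>.\<close>
  define y where "y = \<Prod>{p \<in> prime_factors n. \<not> p dvd h}"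
  have "\<not> p dvd y - h \<and> \<not> p dvd y + h" if p: "prime p" "p dvd n" for p
  proof (cases "p dvd h")
    case True
    have "\<not> p dvd y"
    proof
      assume "p dvd y"
      then obtain q where "q \<in> prime_factors n" "\<not> q dvd h" "p dvd q"
        using prime_dvd_prod_iff[OF _ p(1), of _ id] by (auto simp: y_def)
      then show False using True p(1) primes_dvd_imp_eq by blast
    qed
    then show ?thesis using True by (simp add: dvd_add_left_iff dvd_diff_left_iff)
  next
    case False
    have "p \<in> prime_factors n" using p assms by (simp add: in_prime_factors_iff)
    then have "p dvd y" using False by (auto simp: y_def intro: dvd_prodI)
    then show ?thesis using False by (simp add: dvd_add_right_iff dvd_diff_right_iff)
  qed
  then show ?thesis using assms by (auto intro: coprime_primeI)
qed

lemma ex_even_add_mult: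
  fixes a b D :: int
  assumes "coprime a D" and "coprime b D"
  shows "\<exists>m. even (a - b + D * m)"
proof (cases "even (a - b)")
  case True
  then show ?thesis by (intro exI[of _ 0]) simp
next
  case False
  then have "odd D" using assms by auto
  then show ?thesis using False by (intro exI[of _ 1]) simp
qed

locale integral_unit_relations =
  fixes D :: int and u :: "int \<Rightarrow> complex"
  assumes modulus_nonzero: "D \<noteq> 0"
    and relation_Ints: "\<And>xs. 1 \<le> length xs \<Longrightarrow> length xs \<le> 6 \<Longrightarrow>
      (\<forall>x\<in>set xs. coprime x D) \<Longrightarrow> D dvd sum_list xs \<Longrightarrow> sum_list (map u xs) \<in> \<int>"
begin

lemma add_uminus_Ints:
  assumes "coprime a D"
  shows "u a + u (- a) \<in> \<int>"
  using relation_Ints[of "[a, - a]"] assms by simp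

lemma diff_Ints_if_dvd_diff:
  assumes "coprime a D" and "coprime b D" and "D dvd a - b"
  shows "u a - u b \<in> \<int>"
proof -
  have "u a + u (- b) \<in> \<int>" using relation_Ints[of "[a, - b]"] assms by simp
  then have "(u a + u (- b)) - (u b + u (- b)) \<in> \<int>"
    using add_uminus_Ints[OF assms(2)] by (rule Ints_diff)
  then show ?thesis by simp
qed

lemma diff_double_Ints:
  assumes "coprime a D" and "coprime b D" and "D dvd a - b - 2 * int k"
  shows "u a - u b - 2 * of_nat k * u 1 \<in> \<int>"
  using assms
proof (induction k arbitrary: a b)
  case 0
  then show ?case using diff_Ints_if_dvd_diff by simp
next
  case (Suc k)
  obtain c c' where c: "coprime c D" "coprime c' D" "c' - c = 2 * int k"
    using ex_coprime_diff_add[OF modulus_nonzero, of "int k"] by force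
  have IH: "u c' - u c - 2 * of_nat k * u 1 \<in> \<int>" using Suc.IH[OF c(2,1)] c(3) by simp
  \<comment> \<open>The six-term relation \<open>a - b - c' + c - 1 - 1 \<equiv> 0\<close> moves the difference
      \<open>a - b \<equiv> 2k + 2\<close> onto the pair \<open>c', c\<close> of difference \<open>2k\<close>.\<close>
  have "D dvd sum_list [a, - b, - c', c, - 1, - 1]"
    using Suc.prems(3) c(3) by (simp add: algebra_simps)
  then have "sum_list (map u [a, - b, - c', c, - 1, - 1]) \<in> \<int>"
    using Suc.prems(1,2) c(1,2) by (intro relation_Ints) auto
  then have R: "u a + u (- b) + u (- c') + u c + 2 * u (- 1) \<in> \<int>"
    by (simp add: algebra_simps)
  have "u a - u b - 2 * of_nat (Suc k) * u 1 =
      (u a + u (- b) + u (- c') + u c + 2 * u (- 1)) - (u b + u (- b)) - (u c' + u (- c'))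
      - 2 * (u 1 + u (- 1)) + (u c' - u c - 2 * of_nat k * u 1)"
    by (simp add: algebra_simps)
  also have "\<dots> \<in> \<int>"
    using R add_uminus_Ints[OF Suc.prems(2)] add_uminus_Ints[OF c(2)] add_uminus_Ints[of 1] IH
    by (intro Ints_add[OF Ints_diff[OF Ints_diff[OF Ints_diff] Ints_mult[OF Ints_numeral]]]) simp_all
  finally show ?case .
qed

lemma diff_even_Ints:
  assumes "coprime a D" and "coprime b D" and "even e" and "D dvd a - b - e"
  shows "u a - u b - of_int e * u 1 \<in> \<int>"
proof -
  obtain k where k: "e = 2 * k" using assms(3) by blast
  show ?thesis
  proof (cases "k \<ge> 0")
    case True
    then have "D dvd a - b - 2 * int (nat k)" using assms(4) k by simp
    then show ?thesis using diff_double_Ints[OF assms(1,2), of "nat k"] True k by simp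
  next
    case False
    have "D dvd b - a - 2 * int (nat (- k))"
      using assms(4) k False by (simp add: dvd_diff_commute algebra_simps)
    then have "- (u b - u a - 2 * of_nat (nat (- k)) * u 1) \<in> \<int>"
      using diff_double_Ints[OF assms(2,1)] by (intro Ints_minus)
    then show ?thesis using False k by (simp add: algebra_simps)
  qed
qed

lemma modulus_mult_Ints: "of_int D * u 1 \<in> \<int>"
proof (cases "even D")
  case True
  then have "u 1 - u 1 - of_int D * u 1 \<in> \<int>" by (intro diff_even_Ints) auto
  then have "- (u 1 - u 1 - of_int D * u 1) \<in> \<int>" by (rule Ints_minus)
  then show ?thesis by simp
next
  case False
  then have coprime_2: "coprime 2 D" by (simp add: coprime_commute)
  have "u 1 + u 1 + u (- 2) \<in> \<int>" using relation_Ints[of "[1, 1, - 2]"] coprime_2 by simp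
  moreover have "u 2 + u (- 2) \<in> \<int>" using add_uminus_Ints[OF coprime_2] .
  moreover have "u 2 - u 1 - of_int (D + 1) * u 1 \<in> \<int>"
    using False coprime_2 by (intro diff_even_Ints) auto
  ultimately have "(u 2 - u 1 - of_int (D + 1) * u 1) - (u 2 + u (- 2)) + (u 1 + u 1 + u (- 2)) \<in> \<int>"
    by (intro Ints_add[OF Ints_diff])
  then have "- (of_int D * u 1) \<in> \<int>" by (simp add: algebra_simps)
  then show ?thesis using Ints_minus by fastforce
qed

lemma diff_linear_Ints:
  assumes "coprime a D" and "coprime b D"
  shows "u a - u b - of_int (a - b) * u 1 \<in> \<int>"
proof -
  obtain m where m: "even (a - b + D * m)" using ex_even_add_mult[OF assms] by blast
  have "u a - u b - of_int (a - b + D * m) * u 1 \<in> \<int>"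
    using assms m by (intro diff_even_Ints) auto
  moreover have "of_int m * (of_int D * u 1) \<in> \<int>" using modulus_mult_Ints by simp
  ultimately have "(u a - u b - of_int (a - b + D * m) * u 1) + of_int m * (of_int D * u 1) \<in> \<int>"
    by (rule Ints_add)
  then show ?thesis by (simp add: algebra_simps)
qed

lemma ex_linear_mod_Ints:
  "\<exists>c::int. \<forall>a. coprime a D \<longrightarrow> u a - of_int c * of_int a / of_int D \<in> \<int>"
proof -
  obtain c where c: "of_int D * u 1 = of_int c" using modulus_mult_Ints by (auto elim: Ints_cases)
  have "u a - of_int c * of_int a / of_int D \<in> \<int>" if "coprime a D" for a
  proof -
    have "of_int c * of_int a / of_int D = of_int a * u 1"
      using c modulus_nonzero by (simp add: field_simps)
    then show ?thesis using diff_linear_Ints[OF that, of 1] by (simp add: algebra_simps)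
  qed
  then show ?thesis by blast
qed

end

definition pos_residue :: "nat \<Rightarrow> int \<Rightarrow> nat" where
  "pos_residue d x = nat ((x - 1) mod int d) + 1"

lemma pos_residue_bounds: "0 < d \<Longrightarrow> pos_residue d x \<in> {1..d}"
  by (simp add: pos_residue_def Suc_le_eq nat_less_iff)

lemma cong_pos_residue: "0 < d \<Longrightarrow> [int (pos_residue d x) = x] (mod int d)"
  by (simp add: pos_residue_def cong_def mod_add_right_eq)

lemma pos_residue_of_nat: "j \<in> {1..d} \<Longrightarrow> pos_residue d (int j) = j"
  by (simp add: pos_residue_def) arith

lemma coprime_pos_residue_iff: "0 < d \<Longrightarrow> coprime (pos_residue d x) d \<longleftrightarrow> coprime x (int d)"
  by (metis coprime_int_iff coprime_cong_cong_left cong_pos_residue)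

lemma integral_unit_relations_pos_residue:
  fixes d :: nat and z :: "nat \<Rightarrow> complex"
  assumes "d > 0"
    and relation_Ints: "\<And>(m::nat) (j::nat \<Rightarrow> nat). 1 \<le> m \<Longrightarrow> m \<le> 6 \<Longrightarrow>
      (\<forall>i<m. j i \<in> {1..d} \<and> coprime (j i) d) \<Longrightarrow> d dvd (\<Sum>i<m. j i) \<Longrightarrow>
      (\<Sum>i<m. z (j i)) \<in> \<int>"
  shows "integral_unit_relations (int d) (\<lambda>x. z (pos_residue d x))"
proof
  show "int d \<noteq> 0" using assms(1) by simp
next
  fix xs :: "int list"
  assume length: "1 \<le> length xs" "length xs \<le> 6"
    and units: "\<forall>x\<in>set xs. coprime x (int d)" and dvd: "int d dvd sum_list xs"
  define j where "j i = pos_residue d (xs ! i)" for i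
  have "\<forall>i<length xs. j i \<in> {1..d} \<and> coprime (j i) d"
    using units pos_residue_bounds[OF assms(1)] coprime_pos_residue_iff[OF assms(1)]
    by (simp add: j_def)
  moreover have "d dvd (\<Sum>i<length xs. j i)"
  proof -
    have "[int (\<Sum>i<length xs. j i) = (\<Sum>i<length xs. xs ! i)] (mod int d)"
      unfolding of_nat_sum j_def by (rule cong_sum) (use assms(1) cong_pos_residue in auto)
    moreover have "(\<Sum>i<length xs. xs ! i) = sum_list xs"
      by (simp add: sum_list_sum_nth atLeast0LessThan)
    ultimately show ?thesis using dvd by (metis cong_dvd_iff of_nat_dvd_iff)
  qed
  ultimately have "(\<Sum>i<length xs. z (j i)) \<in> \<int>" using relation_Ints length by blast
  then show "sum_list (map (\<lambda>x. z (pos_residue d x)) xs) \<in> \<int>"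
    by (simp add: sum_list_sum_nth atLeast0LessThan j_def)
qed

theorem lemma3p8:
  fixes d :: nat and z :: "nat \<Rightarrow> complex"
  assumes "d > 0"
    and "\<And>(m::nat) (j::nat \<Rightarrow> nat). 1 \<le> m \<Longrightarrow> m \<le> 6 \<Longrightarrow>
           (\<forall>i<m. j i \<in> {1..d} \<and> coprime (j i) d) \<Longrightarrow>
           d dvd (\<Sum>i<m. j i) \<Longrightarrow>
           (\<Sum>i<m. z (j i)) \<in> \<int>"
  shows "\<exists>c::int. \<forall>j\<in>{1..d}. coprime j d \<longrightarrow>
           z j - of_int c * of_nat j / of_nat d \<in> \<int>"
proof -
  interpret integral_unit_relations "int d" "\<lambda>x. z (pos_residue d x)"
    using integral_unit_relations_pos_residue[OF assms] .
  obtain c where c: "\<forall>a. coprime a (int d) \<longrightarrow>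
      z (pos_residue d a) - of_int c * of_int a / of_int (int d) \<in> \<int>"
    using ex_linear_mod_Ints by blast
  have "z j - of_int c * of_nat j / of_nat d \<in> \<int>" if "j \<in> {1..d}" "coprime j d" for j
    using c[rule_format, of "int j"] that by (simp add: pos_residue_of_nat)
  then show ?thesis by blast
qed

end
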